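(* Let $X$ be a graph (multiple edges and loops allowed) which is connected, has countable vertex set, has bounded degree, and has no vertex of degree one. Fix a vertex $x_0\in VX$. For $x\in VX$ and $m\ge 1$ let $c_m(x)$ be the number of geodesic loops of length $m$ starting at $x$, and let $N_m(x_0)$ be the number of closed geodesic paths of length $m$ starting at $x_0$. Define formal power series $C(u:x)=\sum_{m=1}^\infty c_m(x)u^m$ for $x\in VX$ and $N(u:x_0)=\sum_{m=1}^\infty N_m(x_0)u^m$, and set (coefficientwise) $(\Delta_X C(u:\cdot))(x_0)=\deg(x_0)C(u:x_0)-\sum_{e\in E_{x_0}}C(u:t(e))$. Then, as formal power series in $u$, $$N(u:x_0)=(1-u^2)^{-2}\{1-(\deg(x_0)-\Delta_X)u^2+(\deg(x_0)-1)u^4\}C(u:\cdot)(x_0),$$ that is, $$N(u:x_0)=(1-u^2)^{-2}\Big[\big(1-\deg(x_0)u^2+(\deg(x_0)-1)u^4\big)C(u:x_0)+u^2(\Delta_X C(u:\cdot))(x_0)\Big].$$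
   Context: A graph $X=(VX,EX)$ consists of disjoint sets $VX$, $EX$ with maps $e\mapsto (o(e),t(e))\in VX\times VX$ and $e\mapsto\bar e$ such that $\bar e\ne e$, $\bar{\bar e}=e$, $o(e)=t(\bar e)$. For $x\in VX$, $E_x=\{e\in EX: o(e)=x\}$ and $\deg(x)=|E_x|$; bounded degree means $\sup_x\deg(x)<\infty$. A path of length $n$ is a sequence of edges $c=(e_1,\dots,e_n)$ with $t(e_i)=o(e_{i+1})$; $o(c)=o(e_1)$, $t(c)=t(e_n)$; it is closed if $o(c)=t(c)$. It has a back-tracking if $e_{i+1}=\bar e_i$ for some $i$, and has a tail if $e_n=\bar e_1$. A geodesic loop is a closed path without back-tracking; a closed geodesic path is a geodesic loop without tail. "Starting at $x$" means $o(c)=x$. *)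

theory Defs
  imports "HOL-Computational_Algebra.Formal_Power_Series" "HOL-Library.Countable_Set"
begin

text \<open>A graph in the sense of Serre: vertex set V, edge set E, origin map org,
  terminus map tm, reversal map rv (e \<mapsto> bar e). Vertices and edges have different
  types, hence are disjoint.\<close>

definition is_graph ::
  "'v set \<Rightarrow> 'e set \<Rightarrow> ('e \<Rightarrow> 'v) \<Rightarrow> ('e \<Rightarrow> 'v) \<Rightarrow> ('e \<Rightarrow> 'e) \<Rightarrow> bool" where
  "is_graph V E org tm rv \<longleftrightarrow>
     (\<forall>e\<in>E. org e \<in> V \<and> tm e \<in> V \<and> rv e \<in> E \<and> rv e \<noteq> e \<and> rv (rv e) = e
            \<and> org e = tm (rv e))"

definition out_edges :: "'e set \<Rightarrow> ('e \<Rightarrow> 'v) \<Rightarrow> 'v \<Rightarrow> 'e set" where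
  "out_edges E org x = {e\<in>E. org e = x}"

definition gdeg :: "'e set \<Rightarrow> ('e \<Rightarrow> 'v) \<Rightarrow> 'v \<Rightarrow> nat" where
  "gdeg E org x = card (out_edges E org x)"

definition bounded_degree :: "'v set \<Rightarrow> 'e set \<Rightarrow> ('e \<Rightarrow> 'v) \<Rightarrow> bool" where
  "bounded_degree V E org \<longleftrightarrow>
     (\<exists>K::nat. \<forall>x\<in>V. finite (out_edges E org x) \<and> gdeg E org x \<le> K)"

definition is_path :: "'e set \<Rightarrow> ('e \<Rightarrow> 'v) \<Rightarrow> ('e \<Rightarrow> 'v) \<Rightarrow> 'e list \<Rightarrow> bool" where
  "is_path E org tm c \<longleftrightarrow> set c \<subseteq> E \<and>
     (\<forall>i. Suc i < length c \<longrightarrow> tm (c ! i) = org (c ! Suc i))"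

definition connected_graph ::
  "'v set \<Rightarrow> 'e set \<Rightarrow> ('e \<Rightarrow> 'v) \<Rightarrow> ('e \<Rightarrow> 'v) \<Rightarrow> bool" where
  "connected_graph V E org tm \<longleftrightarrow>
     (\<forall>x\<in>V. \<forall>y\<in>V. x = y \<or>
        (\<exists>c. c \<noteq> [] \<and> is_path E org tm c \<and> org (hd c) = x \<and> tm (last c) = y))"

definition has_backtracking :: "('e \<Rightarrow> 'e) \<Rightarrow> 'e list \<Rightarrow> bool" where
  "has_backtracking rv c \<longleftrightarrow> (\<exists>i. Suc i < length c \<and> c ! Suc i = rv (c ! i))"

definition has_tail :: "('e \<Rightarrow> 'e) \<Rightarrow> 'e list \<Rightarrow> bool" where
  "has_tail rv c \<longleftrightarrow> c \<noteq> [] \<and> last c = rv (hd c)"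

definition geodesic_loops ::
  "'e set \<Rightarrow> ('e \<Rightarrow> 'v) \<Rightarrow> ('e \<Rightarrow> 'v) \<Rightarrow> ('e \<Rightarrow> 'e) \<Rightarrow> nat \<Rightarrow> 'v \<Rightarrow> 'e list set" where
  "geodesic_loops E org tm rv m x =
     {c. length c = m \<and> c \<noteq> [] \<and> is_path E org tm c \<and> org (hd c) = x \<and> tm (last c) = x
         \<and> \<not> has_backtracking rv c}"

definition closed_geodesics ::
  "'e set \<Rightarrow> ('e \<Rightarrow> 'v) \<Rightarrow> ('e \<Rightarrow> 'v) \<Rightarrow> ('e \<Rightarrow> 'e) \<Rightarrow> nat \<Rightarrow> 'v \<Rightarrow> 'e list set" where
  "closed_geodesics E org tm rv m x =
     {c \<in> geodesic_loops E org tm rv m x. \<not> has_tail rv c}"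

definition loopC ::
  "'e set \<Rightarrow> ('e \<Rightarrow> 'v) \<Rightarrow> ('e \<Rightarrow> 'v) \<Rightarrow> ('e \<Rightarrow> 'e) \<Rightarrow> 'v \<Rightarrow> rat fps" where
  "loopC E org tm rv x =
     Abs_fps (\<lambda>m. if m = 0 then 0 else of_nat (card (geodesic_loops E org tm rv m x)))"

definition closedN ::
  "'e set \<Rightarrow> ('e \<Rightarrow> 'v) \<Rightarrow> ('e \<Rightarrow> 'v) \<Rightarrow> ('e \<Rightarrow> 'e) \<Rightarrow> 'v \<Rightarrow> rat fps" where
  "closedN E org tm rv x =
     Abs_fps (\<lambda>m. if m = 0 then 0 else of_nat (card (closed_geodesics E org tm rv m x)))"

definition graph_laplacian ::
  "'e set \<Rightarrow> ('e \<Rightarrow> 'v) \<Rightarrow> ('e \<Rightarrow> 'v) \<Rightarrow> ('v \<Rightarrow> rat fps) \<Rightarrow> 'v \<Rightarrow> rat fps" where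
  "graph_laplacian E org tm F x =
     of_nat (gdeg E org x) * F x - (\<Sum>e\<in>out_edges E org x. F (tm e))"

end

theory Submission
  imports Defs
begin

text \<open>Let \<open>C\<^sub>n(y)\<close> be the geodesic loops of length \<open>n\<close> at \<open>y\<close> and \<open>T\<^sub>n(x) \<subseteq> C\<^sub>n(x)\<close>
  those with a tail, so that \<open>N\<^sub>n(x) = |C\<^sub>n(x)| - |T\<^sub>n(x)|\<close>. A loop in \<open>T\<^sub>n\<^sub>+\<^sub>2(x)\<close> is
  \<open>e c e\<^sup>-\<close> with \<open>e \<in> E\<^sub>x\<close> and \<open>c \<in> C\<^sub>n(t(e))\<close> neither starting with \<open>e\<^sup>-\<close> nor ending with
  \<open>e\<close>. Inclusion--exclusion (path reversal swaps the two conditions) reduces this count to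
  the loops at \<open>t(e)\<close> starting with \<open>e\<^sup>-\<close> but not ending with \<open>e\<close>, which over all
  \<open>e \<in> E\<^sub>x\<close> correspond to the closed geodesics at \<open>x\<close>, and the loops doing both, which
  are \<open>e\<^sup>- c' e\<close> with \<open>c' \<in> C\<^sub>n\<^sub>-\<^sub>2(x)\<close> avoiding \<open>e\<close> at its start and \<open>e\<^sup>-\<close> at its end: for
  each \<open>c'\<close> there are \<open>deg(x) - 2\<close> such \<open>e\<close>, plus one if \<open>c'\<close> has a tail. The resulting
  recurrence for \<open>|T\<^sub>n(x)|\<close> is a linear relation between generating functions, which
  solves to the formula.\<close>

unbundle fps_syntax

definition nonbacktracking_step :: "('e \<Rightarrow> 'v) \<Rightarrow> ('e \<Rightarrow> 'v) \<Rightarrow> ('e \<Rightarrow> 'e) \<Rightarrow> 'e \<Rightarrow> 'e \<Rightarrow> bool" where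
  "nonbacktracking_step org tm rv a b \<longleftrightarrow> tm a = org b \<and> b \<noteq> rv a"

lemma geodesic_loops_iff:
  "c \<in> geodesic_loops E org tm rv n y \<longleftrightarrow>
     length c = n \<and> c \<noteq> [] \<and> set c \<subseteq> E \<and> successively (nonbacktracking_step org tm rv) c
     \<and> org (hd c) = y \<and> tm (last c) = y"
proof -
  have "successively (nonbacktracking_step org tm rv) c \<longleftrightarrow>
     successively (\<lambda>a b. tm a = org b) c \<and> successively (\<lambda>a b. b \<noteq> rv a) c"
    unfolding successively_conv_nth nonbacktracking_step_def by blast
  then show ?thesis
    unfolding geodesic_loops_def is_path_def has_backtracking_def successively_conv_nth
    by auto
qed

lemma geodesic_loops_Cons:
  "e # c \<in> geodesic_loops E org tm rv m y \<longleftrightarrow>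
     m = Suc (length c) \<and> e \<in> E \<and> set c \<subseteq> E \<and> org e = y \<and>
     (if c = [] then tm e = y
      else tm (last c) = y \<and> nonbacktracking_step org tm rv e (hd c)
        \<and> successively (nonbacktracking_step org tm rv) c)"
  by (cases "c = []") (auto simp: geodesic_loops_iff successively_Cons)

lemma geodesic_loops_Cons_snoc:
  "e # c @ [f] \<in> geodesic_loops E org tm rv m y \<longleftrightarrow>
     m = Suc (Suc (length c)) \<and> e \<in> E \<and> f \<in> E \<and> set c \<subseteq> E \<and> org e = y \<and> tm f = y \<and>
     (if c = [] then nonbacktracking_step org tm rv e f
      else nonbacktracking_step org tm rv e (hd c) \<and> successively (nonbacktracking_step org tm rv) c
        \<and> nonbacktracking_step org tm rv (last c) f)"
  by (cases "c = []") (auto simp: geodesic_loops_iff successively_Cons successively_append_iff)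

lemma geodesic_loops_0: "geodesic_loops E org tm rv 0 y = {}"
  by (auto simp: geodesic_loops_iff)

lemma loopC_nth: "loopC E org tm rv y $ m = of_nat (card (geodesic_loops E org tm rv m y))"
  by (simp add: loopC_def geodesic_loops_0)

lemma closedN_nth: "closedN E org tm rv y $ m = of_nat (card (closed_geodesics E org tm rv m y))"
  by (simp add: closedN_def closed_geodesics_def geodesic_loops_0)

lemma nat_less_2_or_Suc_Suc:
  obtains "m < 2" | n where "m = Suc (Suc n)"
  by (metis less_2_cases_iff not0_implies_Suc not_less_eq)

lemma length_Suc_Suc_conv_Cons_snoc:
  "length c = Suc (Suc n) \<Longrightarrow> \<exists>e c' f. c = e # c' @ [f] \<and> length c' = n"
  by (cases c; cases "tl c" rule: rev_cases) auto

lemma card_filter_eq_sum: "finite S \<Longrightarrow> card {c\<in>S. P c} = (\<Sum>c\<in>S. if P c then 1 else 0)"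
  using sum.inter_filter[of S "\<lambda>_. 1 :: nat" P] by (simp only: card_eq_sum)

locale locally_finite_graph =
  fixes V :: "'v set" and E :: "'e set" and org tm :: "'e \<Rightarrow> 'v" and rv :: "'e \<Rightarrow> 'e"
  assumes graph: "is_graph V E org tm rv"
    and finite_out_edges: "x \<in> V \<Longrightarrow> finite (out_edges E org x)"
begin

abbreviation "loops \<equiv> geodesic_loops E org tm rv"
abbreviation "step \<equiv> nonbacktracking_step org tm rv"
abbreviation "out \<equiv> out_edges E org"

lemma org_in_V: "e \<in> E \<Longrightarrow> org e \<in> V" and tm_in_V: "e \<in> E \<Longrightarrow> tm e \<in> V"
  and rv_in_E[simp]: "e \<in> E \<Longrightarrow> rv e \<in> E" and rv_neq: "e \<in> E \<Longrightarrow> rv e \<noteq> e"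
  and rv_rv[simp]: "e \<in> E \<Longrightarrow> rv (rv e) = e" and tm_rv[simp]: "e \<in> E \<Longrightarrow> tm (rv e) = org e"
  using graph unfolding is_graph_def by auto

lemma org_rv[simp]: "e \<in> E \<Longrightarrow> org (rv e) = tm e"
  by (metis rv_in_E rv_rv tm_rv)

lemma rv_eq_iff: "a \<in> E \<Longrightarrow> b \<in> E \<Longrightarrow> rv a = rv b \<longleftrightarrow> a = b"
  by (metis rv_rv)

lemma step_rv_right: "a \<in> E \<Longrightarrow> e \<in> E \<Longrightarrow> step a (rv e) \<longleftrightarrow> tm a = tm e \<and> a \<noteq> e"
  unfolding nonbacktracking_step_def using rv_eq_iff by auto

lemma out_edges_iff: "e \<in> out x \<longleftrightarrow> e \<in> E \<and> org e = x"
  by (simp add: out_edges_def)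

definition reverse_path :: "'e list \<Rightarrow> 'e list" where
  "reverse_path c = rev (map rv c)"

lemma reverse_path_reverse_path: "set c \<subseteq> E \<Longrightarrow> reverse_path (reverse_path c) = c"
  unfolding reverse_path_def rev_map[symmetric] by (induction c) auto

lemma reverse_path_simps:
  "length (reverse_path c) = length c" "reverse_path c = [] \<longleftrightarrow> c = []"
  "set c \<subseteq> E \<Longrightarrow> set (reverse_path c) \<subseteq> E"
  "c \<noteq> [] \<Longrightarrow> hd (reverse_path c) = rv (last c)"
  "c \<noteq> [] \<Longrightarrow> last (reverse_path c) = rv (hd c)"
  unfolding reverse_path_def by (auto simp: hd_rev last_rev hd_map last_map)

lemma step_rv_rv: "a \<in> E \<Longrightarrow> b \<in> E \<Longrightarrow> step (rv b) (rv a) \<longleftrightarrow> step a b"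
  unfolding nonbacktracking_step_def by (metis org_rv rv_rv tm_rv)

lemma successively_reverse_path:
  "set c \<subseteq> E \<Longrightarrow> successively step (reverse_path c) \<longleftrightarrow> successively step c"
  unfolding reverse_path_def successively_rev successively_map
  by (rule successively_cong) (use step_rv_rv in auto)

lemma reverse_path_in_loops:
  assumes "c \<in> loops n y"
  shows "reverse_path c \<in> loops n y"
proof -
  from assms have "c \<noteq> []" "set c \<subseteq> E" by (auto simp: geodesic_loops_iff)
  then have "hd c \<in> E" "last c \<in> E" by auto
  with assms \<open>c \<noteq> []\<close> \<open>set c \<subseteq> E\<close> show ?thesis
    by (auto simp: geodesic_loops_iff reverse_path_simps successively_reverse_path)
qed

lemma finite_loops:
  assumes "y \<in> V"
  shows "finite (loops n y)"
proof -
  let ?P = "\<lambda>n y. {c. length c = n \<and> set c \<subseteq> E \<and> successively step c \<and> (c \<noteq> [] \<longrightarrow> org (hd c) = y)}"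
  have "finite (?P n y)"
    using assms
  proof (induction n arbitrary: y)
    case (Suc n)
    have "?P (Suc n) y \<subseteq> (\<Union>e\<in>out y. (#) e ` ?P n (tm e))"
    proof
      fix c assume c: "c \<in> ?P (Suc n) y"
      then obtain e c' where ce: "c = e # c'" by (cases c) auto
      with c have "e \<in> out y" "c' \<in> ?P n (tm e)"
        by (auto simp: out_edges_iff successively_Cons nonbacktracking_step_def)
      with ce show "c \<in> (\<Union>e\<in>out y. (#) e ` ?P n (tm e))" by blast
    qed
    moreover have "finite (\<Union>e\<in>out y. (#) e ` ?P n (tm e))"
      using Suc finite_out_edges by (auto simp: out_edges_iff tm_in_V)
    ultimately show ?case by (rule finite_subset)
  qed simp
  moreover have "loops n y \<subseteq> ?P n y" by (auto simp: geodesic_loops_iff)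
  ultimately show ?thesis by (rule finite_subset[rotated])
qed

definition tailed_loops :: "nat \<Rightarrow> 'v \<Rightarrow> 'e list set" where
  "tailed_loops n x = {c \<in> loops n x. has_tail rv c}"

definition loops_starting_with :: "nat \<Rightarrow> 'e \<Rightarrow> 'e list set" where
  "loops_starting_with n a = {c \<in> loops n (org a). hd c = a}"

definition loops_ending_with :: "nat \<Rightarrow> 'e \<Rightarrow> 'e list set" where
  "loops_ending_with n a = {c \<in> loops n (tm a). last c = a}"

definition retracing_loops :: "nat \<Rightarrow> 'e \<Rightarrow> 'e list set" where
  "retracing_loops n a = {c \<in> loops n (org a). hd c = a \<and> last c = rv a}"

definition tail_cores :: "nat \<Rightarrow> 'e \<Rightarrow> 'e list set" where
  "tail_cores n a = {c \<in> loops n (tm a). hd c \<noteq> rv a \<and> last c \<noteq> a}"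

lemma card_loops_eq_closed_plus_tailed:
  assumes "x \<in> V"
  shows "card (loops n x) = card (closed_geodesics E org tm rv n x) + card (tailed_loops n x)"
proof -
  have "loops n x = closed_geodesics E org tm rv n x \<union> tailed_loops n x"
    "closed_geodesics E org tm rv n x \<inter> tailed_loops n x = {}"
    by (auto simp: closed_geodesics_def tailed_loops_def)
  with finite_loops[OF assms] show ?thesis
    by (metis card_Un_disjoint finite_Un)
qed

lemma card_tailed_loops:
  assumes "x \<in> V"
  shows "card (tailed_loops n x) = (\<Sum>a\<in>out x. card (retracing_loops n a))"
proof -
  have "tailed_loops n x = (\<Union>a\<in>out x. retracing_loops n a)"
    by (auto simp: tailed_loops_def retracing_loops_def has_tail_def geodesic_loops_iff
        out_edges_iff dest: subsetD[OF _ hd_in_set])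
  moreover have "finite (retracing_loops n a)" if "a \<in> out x" for a
    using that finite_loops org_in_V by (auto simp: retracing_loops_def out_edges_iff)
  ultimately show ?thesis
    using finite_out_edges[OF assms]
    by (simp add: card_UN_disjoint disjoint_iff retracing_loops_def)
qed

lemma Cons_snoc_rv_in_loops:
  assumes "a \<in> E"
  shows "a # c @ [rv a] \<in> loops (Suc (Suc n)) (org a) \<longleftrightarrow> c \<in> tail_cores n a"
proof (cases "c = []")
  case True
  then show ?thesis
    by (simp add: geodesic_loops_Cons_snoc tail_cores_def geodesic_loops_iff
        nonbacktracking_step_def)
next
  case False
  with assms have "a # c @ [rv a] \<in> loops (Suc (Suc n)) (org a) \<longleftrightarrow>
      n = length c \<and> set c \<subseteq> E \<and> step a (hd c) \<and> successively step c \<and> step (last c) (rv a)"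
    by (simp add: geodesic_loops_Cons_snoc)
  also have "\<dots> \<longleftrightarrow> c \<in> tail_cores n a"
  proof -
    have "set c \<subseteq> E \<Longrightarrow> step (last c) (rv a) \<longleftrightarrow> tm (last c) = tm a \<and> last c \<noteq> a"
      using assms last_in_set[OF False] step_rv_right by blast
    with False show ?thesis
      by (auto simp: tail_cores_def geodesic_loops_iff nonbacktracking_step_def[of _ _ _ a])
  qed
  finally show ?thesis .
qed

lemma card_retracing_loops:
  assumes "a \<in> E"
  shows "card (retracing_loops (Suc (Suc n)) a) = card (tail_cores n a)"
proof -
  have "retracing_loops (Suc (Suc n)) a = (\<lambda>c. a # c @ [rv a]) ` tail_cores n a"
  proof (intro equalityI subsetI)
    fix l assume l: "l \<in> retracing_loops (Suc (Suc n)) a"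
    then obtain e c f where "l = e # c @ [f]"
      using length_Suc_Suc_conv_Cons_snoc by (fastforce simp: retracing_loops_def geodesic_loops_iff)
    with l have "l = a # c @ [rv a]" "a # c @ [rv a] \<in> loops (Suc (Suc n)) (org a)"
      by (auto simp: retracing_loops_def)
    then show "l \<in> (\<lambda>c. a # c @ [rv a]) ` tail_cores n a"
      using Cons_snoc_rv_in_loops[OF assms] by blast
  qed (use Cons_snoc_rv_in_loops[OF assms] in \<open>auto simp: retracing_loops_def\<close>)
  moreover have "inj_on (\<lambda>c. a # c @ [rv a]) (tail_cores n a)"
    by (auto intro: inj_onI)
  ultimately show ?thesis by (simp add: card_image)
qed

lemma retracing_loops_0: "retracing_loops 0 a = {}"
  by (simp add: retracing_loops_def geodesic_loops_0)

lemma retracing_loops_1: "a \<in> E \<Longrightarrow> retracing_loops (Suc 0) a = {}"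
  by (auto simp: retracing_loops_def geodesic_loops_iff length_Suc_conv dest: rv_neq)

lemma card_loops_ending_with_rv:
  assumes "a \<in> E"
  shows "card (loops_ending_with n (rv a)) = card (loops_starting_with n a)"
proof -
  have "bij_betw reverse_path (loops_starting_with n a) (loops_ending_with n (rv a))"
  proof (rule bij_betw_byWitness[where f' = reverse_path])
    show "\<forall>c\<in>loops_starting_with n a. reverse_path (reverse_path c) = c"
      "\<forall>c\<in>loops_ending_with n (rv a). reverse_path (reverse_path c) = c"
      by (auto simp: loops_starting_with_def loops_ending_with_def geodesic_loops_iff
          reverse_path_reverse_path)
    show "reverse_path ` loops_starting_with n a \<subseteq> loops_ending_with n (rv a)"
    proof clarify
      fix c assume "c \<in> loops_starting_with n a"
      then have "c \<in> loops n (org a)" "c \<noteq> []" "hd c = a"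
        by (auto simp: loops_starting_with_def geodesic_loops_iff)
      with assms show "reverse_path c \<in> loops_ending_with n (rv a)"
        by (simp add: loops_ending_with_def reverse_path_in_loops reverse_path_simps)
    qed
    show "reverse_path ` loops_ending_with n (rv a) \<subseteq> loops_starting_with n a"
    proof clarify
      fix c assume "c \<in> loops_ending_with n (rv a)"
      then have "c \<in> loops n (org a)" "c \<noteq> []" "last c = rv a"
        using assms by (auto simp: loops_ending_with_def geodesic_loops_iff)
      with assms show "reverse_path c \<in> loops_starting_with n a"
        by (simp add: loops_starting_with_def reverse_path_in_loops reverse_path_simps)
    qed
  qed
  then show ?thesis by (rule bij_betw_same_card[symmetric])
qed

lemma card_tail_cores:
  assumes "e \<in> E"
  shows "int (card (tail_cores n e)) = int (card (loops n (tm e)))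
    - 2 * int (card (loops_starting_with n (rv e) - loops_ending_with n e))
    - int (card (retracing_loops n (rv e)))"
proof -
  define S where "S = loops_starting_with n (rv e)"
  define L where "L = loops_ending_with n e"
  have fin: "finite (loops n (tm e))" using finite_loops tm_in_V assms by blast
  have sub: "S \<union> L \<subseteq> loops n (tm e)"
    using assms unfolding S_def L_def loops_starting_with_def loops_ending_with_def by auto
  have cores: "tail_cores n e = loops n (tm e) - (S \<union> L)"
    using assms unfolding tail_cores_def S_def L_def loops_starting_with_def loops_ending_with_def
    by auto
  have retracing: "retracing_loops n (rv e) = S \<inter> L"
    using assms unfolding retracing_loops_def S_def L_def loops_starting_with_def loops_ending_with_def
    by auto
  have "finite S" "finite L" using sub fin finite_subset by auto
  have "card L = card S"
    using card_loops_ending_with_rv[of "rv e" n] assms by (simp add: S_def L_def)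
  moreover have "card S + card L = card (S \<union> L) + card (S \<inter> L)"
    using \<open>finite S\<close> \<open>finite L\<close> by (rule card_Un_Int)
  moreover have "card S = card (S \<inter> L) + card (S - L)"
    using \<open>finite S\<close> by (rule card_Int_Diff)
  moreover have "card (loops n (tm e)) = card (S \<union> L) + card (tail_cores n e)"
    using card_Int_Diff[OF fin, of "S \<union> L"] sub unfolding cores by (simp add: Int_absorb1)
  ultimately show ?thesis
    unfolding retracing S_def[symmetric] L_def[symmetric] by linarith
qed

text \<open>Reversing everything after the first edge: the no-tail condition of \<open>e l\<close> turns
  into the absence of backtracking at the start of \<open>e\<^sup>- l\<^sup>-\<close>, and vice versa.\<close>

lemma Cons_in_closed_geodesics_iff:
  assumes e: "e \<in> E" and l: "set l \<subseteq> E"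
  shows "e # l \<in> closed_geodesics E org tm rv n (org e) \<longleftrightarrow>
    rv e # reverse_path l \<in> loops_starting_with n (rv e) - loops_ending_with n e"
proof (cases "l = []")
  case True
  then show ?thesis
    using e rv_neq[OF e]
    by (auto simp: closed_geodesics_def loops_starting_with_def loops_ending_with_def
        geodesic_loops_Cons has_tail_def reverse_path_def)
next
  case False
  have ends: "hd l \<in> E" "last l \<in> E" using False l by auto
  let ?common = "n = Suc (length l) \<and> tm (last l) = org e \<and> tm e = org (hd l)
    \<and> hd l \<noteq> rv e \<and> last l \<noteq> rv e \<and> successively step l"
  have "e # l \<in> closed_geodesics E org tm rv n (org e) \<longleftrightarrow> ?common"
    using False e l
    by (auto simp: closed_geodesics_def geodesic_loops_Cons has_tail_def
        nonbacktracking_step_def[of _ _ _ e])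
  moreover have "rv e # reverse_path l \<in> loops_starting_with n (rv e) - loops_ending_with n e
      \<longleftrightarrow> ?common"
  proof -
    have "step (rv e) (rv (last l)) \<longleftrightarrow> tm (last l) = org e \<and> last l \<noteq> rv e"
      using e ends by (auto simp: step_rv_rv nonbacktracking_step_def[of _ _ _ "last l"])
    moreover have "rv (hd l) \<noteq> e \<longleftrightarrow> hd l \<noteq> rv e" using e ends by auto
    ultimately show ?thesis
      using False e l ends
      by (auto simp: loops_starting_with_def loops_ending_with_def geodesic_loops_Cons
          reverse_path_simps successively_reverse_path)
  qed
  ultimately show ?thesis by blast
qed

lemma card_closed_geodesics:
  assumes "x \<in> V"
  shows "card (closed_geodesics E org tm rv n x)
    = (\<Sum>e\<in>out x. card (loops_starting_with n (rv e) - loops_ending_with n e))"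
proof -
  define F where "F e = loops_starting_with n (rv e) - loops_ending_with n e" for e
  let ?CG = "closed_geodesics E org tm rv n x"
  have in_F: "c = rv e # tl c \<and> set (tl c) \<subseteq> E" if "c \<in> F e" for c e
    using that by (cases c) (auto simp: F_def loops_starting_with_def geodesic_loops_iff)
  have in_CG: "l = hd l # tl l \<and> hd l \<in> out x \<and> set (tl l) \<subseteq> E" if "l \<in> ?CG" for l
    using that by (cases l) (auto simp: closed_geodesics_def geodesic_loops_iff out_edges_iff)
  have iff: "e # l \<in> ?CG \<longleftrightarrow> rv e # reverse_path l \<in> F e" if "e \<in> out x" "set l \<subseteq> E" for e l
    using that Cons_in_closed_geodesics_iff by (auto simp: F_def out_edges_iff)
  have "bij_betw (\<lambda>(e, c). e # reverse_path (tl c)) (Sigma (out x) F) ?CG"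
  proof (rule bij_betw_byWitness[where f' = "\<lambda>l. (hd l, rv (hd l) # reverse_path (tl l))"])
    show "\<forall>p\<in>Sigma (out x) F. (\<lambda>l. (hd l, rv (hd l) # reverse_path (tl l)))
        ((\<lambda>(e, c). e # reverse_path (tl c)) p) = p"
      using in_F by (force simp: reverse_path_reverse_path)
    show "\<forall>l\<in>?CG. (\<lambda>(e, c). e # reverse_path (tl c))
        ((\<lambda>l. (hd l, rv (hd l) # reverse_path (tl l))) l) = l"
      using in_CG by (force simp: reverse_path_reverse_path)
    show "(\<lambda>(e, c). e # reverse_path (tl c)) ` Sigma (out x) F \<subseteq> ?CG"
    proof clarify
      fix e c assume "e \<in> out x" "c \<in> F e"
      with in_F[OF \<open>c \<in> F e\<close>] iff[of e "reverse_path (tl c)"]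
      show "e # reverse_path (tl c) \<in> ?CG"
        by (simp add: reverse_path_reverse_path reverse_path_simps)
    qed
    show "(\<lambda>l. (hd l, rv (hd l) # reverse_path (tl l))) ` ?CG \<subseteq> Sigma (out x) F"
      using in_CG iff by fastforce
  qed
  then have "card ?CG = card (Sigma (out x) F)" by (simp add: bij_betw_same_card)
  also have "\<dots> = (\<Sum>e\<in>out x. card (F e))"
  proof (rule card_SigmaI)
    show "finite (out x)" using finite_out_edges[OF assms] .
    show "\<forall>e\<in>out x. finite (F e)"
      using finite_loops tm_in_V by (auto simp: F_def loops_starting_with_def out_edges_iff)
  qed
  finally show ?thesis unfolding F_def .
qed

lemma card_out_edges_avoiding_ends:
  assumes c: "c \<in> loops n x"
  shows "int (card {e \<in> out x. hd c \<noteq> e \<and> last c \<noteq> rv e})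
    = int (card (out x)) - 2 + (if has_tail rv c then 1 else 0)"
proof -
  have ends: "c \<noteq> []" "hd c \<in> E" "last c \<in> E" "org (hd c) = x" "tm (last c) = x"
    using c by (auto simp: geodesic_loops_iff)
  have fin: "finite (out x)" using finite_out_edges org_in_V ends by blast
  have sub: "{hd c, rv (last c)} \<subseteq> out x" using ends by (auto simp: out_edges_iff)
  have "{e \<in> out x. hd c \<noteq> e \<and> last c \<noteq> rv e} = out x - {hd c, rv (last c)}"
    using ends by (auto simp: out_edges_iff)
  then have "card {e \<in> out x. hd c \<noteq> e \<and> last c \<noteq> rv e} = card (out x) - card {hd c, rv (last c)}"
    using card_Diff_subset[OF finite_subset[OF sub fin] sub] by simp
  moreover have "card {hd c, rv (last c)} \<le> card (out x)" using card_mono[OF fin sub] .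
  moreover have "has_tail rv c \<longleftrightarrow> hd c = rv (last c)"
    using ends unfolding has_tail_def by (metis rv_rv)
  ultimately show ?thesis by (auto simp: card_insert_if)
qed

lemma sum_card_tail_cores_rv:
  assumes "x \<in> V"
  shows "int (\<Sum>e\<in>out x. card (tail_cores n (rv e)))
    = (int (card (out x)) - 2) * int (card (loops n x)) + int (card (tailed_loops n x))"
proof -
  have fin: "finite (loops n x)" using finite_loops[OF assms] .
  have "(\<Sum>e\<in>out x. card (tail_cores n (rv e)))
      = (\<Sum>e\<in>out x. \<Sum>c\<in>loops n x. if hd c \<noteq> e \<and> last c \<noteq> rv e then 1 else 0)"
  proof (rule sum.cong[OF refl])
    fix e assume "e \<in> out x"
    then have "tail_cores n (rv e) = {c \<in> loops n x. hd c \<noteq> e \<and> last c \<noteq> rv e}"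
      by (auto simp: tail_cores_def out_edges_iff)
    then show "card (tail_cores n (rv e))
        = (\<Sum>c\<in>loops n x. if hd c \<noteq> e \<and> last c \<noteq> rv e then 1 else 0)"
      by (simp add: card_filter_eq_sum[OF fin])
  qed
  also have "\<dots> = (\<Sum>c\<in>loops n x. card {e \<in> out x. hd c \<noteq> e \<and> last c \<noteq> rv e})"
    by (subst sum.swap) (simp add: card_filter_eq_sum[OF finite_out_edges[OF assms]])
  finally have "int (\<Sum>e\<in>out x. card (tail_cores n (rv e)))
      = (\<Sum>c\<in>loops n x. int (card (out x)) - 2 + (if has_tail rv c then 1 else 0))"
    by (simp add: card_out_edges_avoiding_ends)
  also have "\<dots> = (int (card (out x)) - 2) * int (card (loops n x))
      + (\<Sum>c\<in>loops n x. if has_tail rv c then 1 else 0)"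
    by (simp add: sum.distrib)
  also have "(\<Sum>c\<in>loops n x. if has_tail rv c then 1 else 0) = int (card (tailed_loops n x))"
    unfolding tailed_loops_def card_filter_eq_sum[OF fin] of_nat_sum by (rule sum.cong) auto
  finally show ?thesis .
qed

lemma card_tailed_loops_recurrence:
  assumes "x \<in> V"
  shows "int (card (tailed_loops (Suc (Suc n)) x))
    = (\<Sum>e\<in>out x. int (card (loops n (tm e)))) - 2 * int (card (closed_geodesics E org tm rv n x))
      - (\<Sum>e\<in>out x. int (card (retracing_loops n (rv e))))"
proof -
  have "int (card (tailed_loops (Suc (Suc n)) x)) = (\<Sum>e\<in>out x. int (card (tail_cores n e)))"
    by (simp add: card_tailed_loops[OF assms] card_retracing_loops out_edges_iff)
  also have "\<dots> = (\<Sum>e\<in>out x. int (card (loops n (tm e)))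
      - 2 * int (card (loops_starting_with n (rv e) - loops_ending_with n e))
      - int (card (retracing_loops n (rv e))))"
    by (rule sum.cong) (simp_all add: card_tail_cores out_edges_iff)
  also have "\<dots> = (\<Sum>e\<in>out x. int (card (loops n (tm e))))
      - 2 * int (card (closed_geodesics E org tm rv n x))
      - (\<Sum>e\<in>out x. int (card (retracing_loops n (rv e))))"
    by (simp add: sum_subtractf sum_distrib_left card_closed_geodesics[OF assms] of_nat_sum)
  finally show ?thesis .
qed

lemma sum_card_retracing_loops_rv:
  assumes "x \<in> V"
  shows "(\<Sum>e\<in>out x. int (card (retracing_loops (Suc (Suc n)) (rv e))))
    = (int (card (out x)) - 2) * int (card (loops n x)) + int (card (tailed_loops n x))"
  using sum_card_tail_cores_rv[OF assms, of n]
  by (simp add: card_retracing_loops out_edges_iff of_nat_sum)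

lemma tailed_loops_0_1: "tailed_loops 0 x = {}" "tailed_loops (Suc 0) x = {}"
  by (auto simp: tailed_loops_def has_tail_def geodesic_loops_iff length_Suc_conv)
    (metis rv_neq)

definition tailed_series :: "'v \<Rightarrow> rat fps" where
  "tailed_series x = Abs_fps (\<lambda>m. of_nat (card (tailed_loops m x)))"

definition retracing_series :: "'v \<Rightarrow> rat fps" where
  "retracing_series x = Abs_fps (\<lambda>m. \<Sum>e\<in>out x. of_nat (card (retracing_loops m (rv e))))"

lemma closedN_eq_loopC_minus_tailed_series:
  assumes "x \<in> V"
  shows "closedN E org tm rv x = loopC E org tm rv x - tailed_series x"
  by (rule fps_ext)
    (simp add: closedN_nth loopC_nth tailed_series_def card_loops_eq_closed_plus_tailed[OF assms])

lemma tailed_series_eq: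
  assumes "x \<in> V"
  shows "tailed_series x = fps_X ^ 2 *
    ((\<Sum>e\<in>out x. loopC E org tm rv (tm e)) - 2 * closedN E org tm rv x - retracing_series x)"
proof (rule fps_ext)
  fix m
  show "tailed_series x $ m = (fps_X ^ 2 *
    ((\<Sum>e\<in>out x. loopC E org tm rv (tm e)) - 2 * closedN E org tm rv x - retracing_series x)) $ m"
  proof (cases m rule: nat_less_2_or_Suc_Suc)
    case (2 n)
    have "rat_of_int (int (card (tailed_loops (Suc (Suc n)) x))) = rat_of_int
        ((\<Sum>e\<in>out x. int (card (loops n (tm e)))) - 2 * int (card (closed_geodesics E org tm rv n x))
          - (\<Sum>e\<in>out x. int (card (retracing_loops n (rv e)))))"
      by (simp only: card_tailed_loops_recurrence[OF assms])
    then show ?thesis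
      by (simp add: 2 tailed_series_def retracing_series_def fps_X_power_mult_nth
          fps_sum_nth loopC_nth closedN_nth numeral_fps_const of_int_sum)
  next
    case 1
    then show ?thesis
      by (auto simp: tailed_series_def fps_X_power_mult_nth tailed_loops_0_1 less_2_cases_iff)
  qed
qed

lemma retracing_series_eq:
  assumes "x \<in> V"
  shows "retracing_series x
    = fps_X ^ 2 * (fps_const (of_nat (card (out x)) - 2) * loopC E org tm rv x + tailed_series x)"
proof (rule fps_ext)
  fix m
  show "retracing_series x $ m
    = (fps_X ^ 2 * (fps_const (of_nat (card (out x)) - 2) * loopC E org tm rv x + tailed_series x)) $ m"
  proof (cases m rule: nat_less_2_or_Suc_Suc)
    case (2 n)
    have "rat_of_int (\<Sum>e\<in>out x. int (card (retracing_loops (Suc (Suc n)) (rv e))))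
        = rat_of_int ((int (card (out x)) - 2) * int (card (loops n x)) + int (card (tailed_loops n x)))"
      by (simp only: sum_card_retracing_loops_rv[OF assms])
    then show ?thesis
      by (simp add: 2 tailed_series_def retracing_series_def fps_X_power_mult_nth
          loopC_nth of_int_sum)
  next
    case 1
    then show ?thesis
      by (auto simp: retracing_series_def fps_X_power_mult_nth retracing_loops_0 retracing_loops_1
          out_edges_iff less_2_cases_iff)
  qed
qed

end

lemma fps_eliminate_tail_series:
  fixes N C S T R d :: "'a::field fps"
  assumes N: "N = C - T"
    and T: "T = fps_X ^ 2 * (S - 2 * N - R)"
    and R: "R = fps_X ^ 2 * ((d - 2) * C + T)"
  shows "N = inverse ((1 - fps_X ^ 2) ^ 2) *
    ((1 - d * fps_X ^ 2 + (d - 1) * fps_X ^ 4) * C + fps_X ^ 2 * (d * C - S))"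
proof -
  define P :: "'a fps" where "P = (1 - fps_X ^ 2) ^ 2"
  have "P * N = (1 - d * fps_X ^ 2 + (d - 1) * fps_X ^ 4) * C + fps_X ^ 2 * (d * C - S)"
    unfolding P_def using N T R by algebra
  moreover have "inverse P * P = 1"
    by (rule inverse_mult_eq_1) (simp add: P_def)
  ultimately show ?thesis
    unfolding P_def[symmetric] by (metis mult.assoc mult_1)
qed

theorem theorem3p1:
  fixes V :: "'v set" and E :: "'e set"
    and org tm :: "'e \<Rightarrow> 'v" and rv :: "'e \<Rightarrow> 'e" and x0 :: 'v
  assumes "is_graph V E org tm rv"
    and "connected_graph V E org tm"
    and "countable V"
    and "bounded_degree V E org"
    and "\<forall>x\<in>V. gdeg E org x \<noteq> 1"
    and "x0 \<in> V"
  shows "closedN E org tm rv x0 =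
     inverse ((1 - fps_X ^ 2) ^ 2) *
       ((1 - of_nat (gdeg E org x0) * fps_X ^ 2 + (of_nat (gdeg E org x0) - 1) * fps_X ^ 4)
            * loopC E org tm rv x0
        + fps_X ^ 2 * graph_laplacian E org tm (loopC E org tm rv) x0)"
proof -
  interpret locally_finite_graph V E org tm rv
    using assms(1,4) by unfold_locales (auto simp: bounded_degree_def)
  have fps_const_degree: "fps_const (of_nat (card (out x0)) - 2) = (of_nat (gdeg E org x0) - 2 :: rat fps)"
    by (simp add: gdeg_def fps_of_nat[symmetric] numeral_fps_const)
  show ?thesis
    unfolding graph_laplacian_def
  proof (rule fps_eliminate_tail_series)
    show "closedN E org tm rv x0 = loopC E org tm rv x0 - tailed_series x0"
      using closedN_eq_loopC_minus_tailed_series[OF assms(6)] .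
    show "tailed_series x0 = fps_X ^ 2 * ((\<Sum>e\<in>out x0. loopC E org tm rv (tm e))
        - 2 * closedN E org tm rv x0 - retracing_series x0)"
      using tailed_series_eq[OF assms(6)] .
    show "retracing_series x0 = fps_X ^ 2 *
        ((of_nat (gdeg E org x0) - 2) * loopC E org tm rv x0 + tailed_series x0)"
      using retracing_series_eq[OF assms(6)] unfolding fps_const_degree .
  qed
qed

end
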